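(* Let $(\mathfrak A,\mathfrak A_0)$ be a Banach quasi *-algebra with unit $e$. The following are equivalent: (i) $\mathcal R_c(\mathfrak A,\mathfrak A_0)$ is sufficient; (ii) $(\mathfrak A,\mathfrak A_0)$ is fully representable. If moreover the positivity condition (P) holds, then (i) and (ii) are also equivalent to: (iii) $(\mathfrak A,\mathfrak A_0)$ is *-semisimple.
   Context: A quasi *-algebra $(\mathfrak A,\mathfrak A_0)$ consists of a complex vector space $\mathfrak A$ and a *-algebra $\mathfrak A_0$ which is a linear subspace of $\mathfrak A$, such that: $\mathfrak A$ carries an involution $a\mapsto a^*$ extending that of $\mathfrak A_0$; $\mathfrak A$ is a bimodule over $\mathfrak A_0$ whose module multiplications extend the multiplication of $\mathfrak A_0$, with $(xa)y=x(ay)$ and $a(xy)=(ax)y$ for all $a\in\mathfrak A$, $x,y\in\mathfrak A_0$; and $(ax)^*=x^*a^*$ for all $a\in\mathfrak A$, $x\in\mathfrak A_0$. A unit is an element $e\in\mathfrak A_0$ with $ae=ea=a$ for all $a\in\mathfrak A$. A normed quasi *-algebra is a quasi *-algebra with a norm $\|\cdot\|$ on $\mathfrak A$ such that $\|a^*\|=\|a\|$ for all $a$, $\mathfrak A_0$ is dense in $\mathfrak A$, and for each $x\in\mathfrak A_0$ the map $a\mapsto ax$ is continuous on $\mathfrak A$ (hence so is $a\mapsto xa$). It is a Banach quasi *-algebra if $(\mathfrak A,\|\cdot\|)$ is complete. A linear functional $\omega$ on $\mathfrak A$ is representable if (L.1) $\omega(x^*x)\ge0$ for all $x\in\mathfrak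 A_0$; (L.2) $\omega(y^*a^*x)=\overline{\omega(x^*ay)}$ for all $x,y\in\mathfrak A_0$, $a\in\mathfrak A$; (L.3) for every $a\in\mathfrak A$ there is $\gamma_a>0$ with $|\omega(a^*x)|\le\gamma_a\,\omega(x^*x)^{1/2}$ for all $x\in\mathfrak A_0$. $\mathcal R_c(\mathfrak A,\mathfrak A_0)$ is the set of norm-continuous representable functionals. For $\omega\in\mathcal R_c(\mathfrak A,\mathfrak A_0)$, $\varphi_\omega(x,y)=\omega(y^*x)$ on $\mathfrak A_0\times\mathfrak A_0$ is closable (i.e. $\varphi_\omega(x_n,x_n)\to0$ whenever $(x_n)\subset\mathfrak A_0$, $\|x_n\|\to0$ and $\varphi_\omega(x_n-x_m,x_n-x_m)\to0$); its closure $\overline{\varphi}_\omega$ has domain $D(\overline{\varphi}_\omega)$ consisting of those $a\in\mathfrak A$ admitting $(x_n)\subset\mathfrak A_0$ with $\|x_n-a\|\to0$ and $\varphi_\omega(x_n-x_m,x_n-x_m)\to0$. Set $\mathfrak A_{\mathcal R}=\bigcap_{\omega\in\mathcal R_c(\mathfrak A,\mathfrak A_0)}D(\overline{\varphi}_\omega)$ (and $\mathfrak A_{\mathcal R}=\mathfrak A$ if $\mathcal R_c=\{0\}$). $\mathfrak A_0^+=\{\sum_{k=1}^n x_k^*x_k: x_k\in\mathfrak A_0,n\in\mathbb N\}$ and $\mathfrak A^+$ is its norm closure (its elements are called positive, written $a\ge0$). $\mathcal R_c(\mathfrak A,\mathfrak A_0)$ is sufficient if for every $a\in\mathfrak A^+$,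 $a\ne0$, there is $\omega\in\mathcal R_c(\mathfrak A,\mathfrak A_0)$ with $\omega(a)>0$. $(\mathfrak A,\mathfrak A_0)$ is fully representable if $\mathcal R_c(\mathfrak A,\mathfrak A_0)$ is sufficient and $\mathfrak A_{\mathcal R}=\mathfrak A$. $\mathcal S_{\mathfrak A_0}(\mathfrak A)$ is the set of sesquilinear forms $\Omega$ on $\mathfrak A\times\mathfrak A$ with $\Omega(a,a)\ge0$, $\Omega(ax,y)=\Omega(x,a^*y)$ ($a\in\mathfrak A$, $x,y\in\mathfrak A_0$) and $|\Omega(a,b)|\le\|a\|\|b\|$ for all $a,b\in\mathfrak A$. $(\mathfrak A,\mathfrak A_0)$ is *-semisimple if for every $a\neq0$ there is $\Omega\in\mathcal S_{\mathfrak A_0}(\mathfrak A)$ with $\Omega(a,a)>0$. Condition (P): if $a\in\mathfrak A$ and $\omega(x^*ax)\ge0$ for every $\omega\in\mathcal R_c(\mathfrak A,\mathfrak A_0)$ and every $x\in\mathfrak A_0$, then $a\in\mathfrak A^+$. *)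

theory Defs
  imports "HOL-Analysis.Analysis" "HOL-Library.Complex_Order"
begin

text \<open>The underlying space of the quasi *-algebra is a type 'a of class banach (a real
Banach space) equipped with a complex scalar multiplication sm that extends the real
one and is compatible with the norm; i.e. a complex Banach space.
The bimodule multiplications are represented by one function qmult; qmult a x and
qmult x a are only meaningful (and only constrained) when x is in A0.\<close>

definition complex_structure :: "(complex \<Rightarrow> 'a::real_normed_vector \<Rightarrow> 'a) \<Rightarrow> bool" where
  "complex_structure sm \<longleftrightarrow>
     (\<forall>r a. sm (complex_of_real r) a = r *\<^sub>R a) \<and>
     (\<forall>c a b. sm c (a + b) = sm c a + sm c b) \<and>
     (\<forall>c d a. sm (c + d) a = sm c a + sm d a) \<and>
     (\<forall>c d a. sm (c * d) a = sm c (sm d a)) \<and>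
     (\<forall>c a. norm (sm c a) = cmod c * norm a)"

definition quasi_star_algebra ::
  "'a::real_normed_vector set \<Rightarrow> (complex \<Rightarrow> 'a \<Rightarrow> 'a) \<Rightarrow> ('a \<Rightarrow> 'a) \<Rightarrow> ('a \<Rightarrow> 'a \<Rightarrow> 'a) \<Rightarrow> bool" where
  "quasi_star_algebra A0 sm star qmult \<longleftrightarrow>
     complex_structure sm \<and>
     \<comment> \<open>A0 is a complex linear subspace\<close>
     0 \<in> A0 \<and> (\<forall>x\<in>A0. \<forall>y\<in>A0. x + y \<in> A0) \<and> (\<forall>c. \<forall>x\<in>A0. sm c x \<in> A0) \<and>
     \<comment> \<open>A0 is an associative algebra (closed under multiplication)\<close>
     (\<forall>x\<in>A0. \<forall>y\<in>A0. qmult x y \<in> A0) \<and>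
     \<comment> \<open>involution on A, preserving A0\<close>
     (\<forall>a b. star (a + b) = star a + star b) \<and>
     (\<forall>c a. star (sm c a) = sm (cnj c) (star a)) \<and>
     (\<forall>a. star (star a) = a) \<and>
     (\<forall>x\<in>A0. star x \<in> A0) \<and>
     \<comment> \<open>bilinearity of the module multiplications\<close>
     (\<forall>a b. \<forall>x\<in>A0. qmult (a + b) x = qmult a x + qmult b x \<and> qmult x (a + b) = qmult x a + qmult x b) \<and>
     (\<forall>a. \<forall>x\<in>A0. \<forall>y\<in>A0. qmult a (x + y) = qmult a x + qmult a y \<and> qmult (x + y) a = qmult x a + qmult y a) \<and>
     (\<forall>c a. \<forall>x\<in>A0. qmult (sm c a) x = sm c (qmult a x) \<and> qmult a (sm c x) = sm c (qmult a x) \<and>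
                    qmult (sm c x) a = sm c (qmult x a) \<and> qmult x (sm c a) = sm c (qmult x a)) \<and>
     \<comment> \<open>bimodule associativity laws\<close>
     (\<forall>a. \<forall>x\<in>A0. \<forall>y\<in>A0. qmult (qmult x a) y = qmult x (qmult a y)) \<and>
     (\<forall>a. \<forall>x\<in>A0. \<forall>y\<in>A0. qmult a (qmult x y) = qmult (qmult a x) y) \<and>
     (\<forall>a. \<forall>x\<in>A0. \<forall>y\<in>A0. qmult (qmult x y) a = qmult x (qmult y a)) \<and>
     \<comment> \<open>compatibility of involution and multiplication\<close>
     (\<forall>a. \<forall>x\<in>A0. star (qmult a x) = qmult (star x) (star a))"

definition qsa_unit ::
  "'a::real_normed_vector set \<Rightarrow> ('a \<Rightarrow> 'a \<Rightarrow> 'a) \<Rightarrow> 'a \<Rightarrow> bool" where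
  "qsa_unit A0 qmult e \<longleftrightarrow> e \<in> A0 \<and> (\<forall>a. qmult a e = a \<and> qmult e a = a)"

definition normed_quasi_star_algebra ::
  "'a::real_normed_vector set \<Rightarrow> (complex \<Rightarrow> 'a \<Rightarrow> 'a) \<Rightarrow> ('a \<Rightarrow> 'a) \<Rightarrow> ('a \<Rightarrow> 'a \<Rightarrow> 'a) \<Rightarrow> bool" where
  "normed_quasi_star_algebra A0 sm star qmult \<longleftrightarrow>
     quasi_star_algebra A0 sm star qmult \<and>
     (\<forall>a. norm (star a) = norm a) \<and>
     closure A0 = UNIV \<and>
     (\<forall>x\<in>A0. continuous_on UNIV (\<lambda>a. qmult a x) \<and> continuous_on UNIV (\<lambda>a. qmult x a))"

text \<open>Banach: completeness is provided by the type class banach.\<close>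
definition banach_quasi_star_algebra ::
  "'a::banach set \<Rightarrow> (complex \<Rightarrow> 'a \<Rightarrow> 'a) \<Rightarrow> ('a \<Rightarrow> 'a) \<Rightarrow> ('a \<Rightarrow> 'a \<Rightarrow> 'a) \<Rightarrow> bool" where
  "banach_quasi_star_algebra A0 sm star qmult \<longleftrightarrow> normed_quasi_star_algebra A0 sm star qmult"

definition clinear_fun :: "(complex \<Rightarrow> 'a \<Rightarrow> 'a) \<Rightarrow> ('a::real_normed_vector \<Rightarrow> complex) \<Rightarrow> bool" where
  "clinear_fun sm \<omega> \<longleftrightarrow> (\<forall>a b. \<omega> (a + b) = \<omega> a + \<omega> b) \<and> (\<forall>c a. \<omega> (sm c a) = c * \<omega> a)"

definition representable ::
  "'a::real_normed_vector set \<Rightarrow> (complex \<Rightarrow> 'a \<Rightarrow> 'a) \<Rightarrow> ('a \<Rightarrow> 'a) \<Rightarrow> ('a \<Rightarrow> 'a \<Rightarrow> 'a) \<Rightarrow> ('a \<Rightarrow> complex) \<Rightarrow> bool" where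
  "representable A0 sm star qmult \<omega> \<longleftrightarrow>
     clinear_fun sm \<omega> \<and>
     (\<forall>x\<in>A0. 0 \<le> \<omega> (qmult (star x) x)) \<and>
     (\<forall>x\<in>A0. \<forall>y\<in>A0. \<forall>a. \<omega> (qmult (qmult (star y) (star a)) x) = cnj (\<omega> (qmult (qmult (star x) a) y))) \<and>
     (\<forall>a. \<exists>\<gamma>>0. \<forall>x\<in>A0. cmod (\<omega> (qmult (star a) x)) \<le> \<gamma> * sqrt (cmod (\<omega> (qmult (star x) x))))"

definition Rc ::
  "'a::real_normed_vector set \<Rightarrow> (complex \<Rightarrow> 'a \<Rightarrow> 'a) \<Rightarrow> ('a \<Rightarrow> 'a) \<Rightarrow> ('a \<Rightarrow> 'a \<Rightarrow> 'a) \<Rightarrow> ('a \<Rightarrow> complex) set" where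
  "Rc A0 sm star qmult = {\<omega>. representable A0 sm star qmult \<omega> \<and> continuous_on UNIV \<omega>}"

text \<open>Domain of the closure of the form phi_omega(x,y) = omega(y* x).\<close>
definition closure_dom ::
  "'a::real_normed_vector set \<Rightarrow> ('a \<Rightarrow> 'a) \<Rightarrow> ('a \<Rightarrow> 'a \<Rightarrow> 'a) \<Rightarrow> ('a \<Rightarrow> complex) \<Rightarrow> 'a set" where
  "closure_dom A0 star qmult \<omega> =
     {a. \<exists>X. (\<forall>n. X n \<in> A0) \<and> X \<longlonglongrightarrow> a \<and>
            (\<forall>\<epsilon>>0. \<exists>N. \<forall>n\<ge>N. \<forall>m\<ge>N. cmod (\<omega> (qmult (star (X n - X m)) (X n - X m))) < \<epsilon>)}"

definition A_R ::
  "'a::real_normed_vector set \<Rightarrow> (complex \<Rightarrow> 'a \<Rightarrow> 'a) \<Rightarrow> ('a \<Rightarrow> 'a) \<Rightarrow> ('a \<Rightarrow> 'a \<Rightarrow> 'a) \<Rightarrow> 'a set" where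
  "A_R A0 sm star qmult =
     (if Rc A0 sm star qmult = {\<lambda>_. 0} then UNIV
      else (\<Inter>\<omega>\<in>Rc A0 sm star qmult. closure_dom A0 star qmult \<omega>))"

definition A0_plus ::
  "'a::real_normed_vector set \<Rightarrow> ('a \<Rightarrow> 'a) \<Rightarrow> ('a \<Rightarrow> 'a \<Rightarrow> 'a) \<Rightarrow> 'a set" where
  "A0_plus A0 star qmult =
     {a. \<exists>(n::nat) xs. (\<forall>k<n. xs k \<in> A0) \<and> a = (\<Sum>k<n. qmult (star (xs k)) (xs k))}"

definition A_plus ::
  "'a::real_normed_vector set \<Rightarrow> ('a \<Rightarrow> 'a) \<Rightarrow> ('a \<Rightarrow> 'a \<Rightarrow> 'a) \<Rightarrow> 'a set" where
  "A_plus A0 star qmult = closure (A0_plus A0 star qmult)"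

definition Rc_sufficient ::
  "'a::real_normed_vector set \<Rightarrow> (complex \<Rightarrow> 'a \<Rightarrow> 'a) \<Rightarrow> ('a \<Rightarrow> 'a) \<Rightarrow> ('a \<Rightarrow> 'a \<Rightarrow> 'a) \<Rightarrow> bool" where
  "Rc_sufficient A0 sm star qmult \<longleftrightarrow>
     (\<forall>a\<in>A_plus A0 star qmult. a \<noteq> 0 \<longrightarrow> (\<exists>\<omega>\<in>Rc A0 sm star qmult. 0 < \<omega> a))"

definition fully_representable ::
  "'a::real_normed_vector set \<Rightarrow> (complex \<Rightarrow> 'a \<Rightarrow> 'a) \<Rightarrow> ('a \<Rightarrow> 'a) \<Rightarrow> ('a \<Rightarrow> 'a \<Rightarrow> 'a) \<Rightarrow> bool" where
  "fully_representable A0 sm star qmult \<longleftrightarrow>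
     Rc_sufficient A0 sm star qmult \<and> A_R A0 sm star qmult = UNIV"

definition sesquilinear_form :: "(complex \<Rightarrow> 'a \<Rightarrow> 'a) \<Rightarrow> ('a::real_normed_vector \<Rightarrow> 'a \<Rightarrow> complex) \<Rightarrow> bool" where
  "sesquilinear_form sm \<Omega> \<longleftrightarrow>
     (\<forall>a b c. \<Omega> (a + b) c = \<Omega> a c + \<Omega> b c) \<and>
     (\<forall>a b c. \<Omega> a (b + c) = \<Omega> a b + \<Omega> a c) \<and>
     (\<forall>z a b. \<Omega> (sm z a) b = z * \<Omega> a b) \<and>
     (\<forall>z a b. \<Omega> a (sm z b) = cnj z * \<Omega> a b)"

definition S_A0 ::
  "'a::real_normed_vector set \<Rightarrow> (complex \<Rightarrow> 'a \<Rightarrow> 'a) \<Rightarrow> ('a \<Rightarrow> 'a) \<Rightarrow> ('a \<Rightarrow> 'a \<Rightarrow> 'a) \<Rightarrow> ('a \<Rightarrow> 'a \<Rightarrow> complex) set" where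
  "S_A0 A0 sm star qmult =
     {\<Omega>. sesquilinear_form sm \<Omega> \<and>
          (\<forall>a. 0 \<le> \<Omega> a a) \<and>
          (\<forall>a. \<forall>x\<in>A0. \<forall>y\<in>A0. \<Omega> (qmult a x) y = \<Omega> x (qmult (star a) y)) \<and>
          (\<forall>a b. cmod (\<Omega> a b) \<le> norm a * norm b)}"

definition star_semisimple ::
  "'a::real_normed_vector set \<Rightarrow> (complex \<Rightarrow> 'a \<Rightarrow> 'a) \<Rightarrow> ('a \<Rightarrow> 'a) \<Rightarrow> ('a \<Rightarrow> 'a \<Rightarrow> 'a) \<Rightarrow> bool" where
  "star_semisimple A0 sm star qmult \<longleftrightarrow>
     (\<forall>a. a \<noteq> 0 \<longrightarrow> (\<exists>\<Omega>\<in>S_A0 A0 sm star qmult. 0 < \<Omega> a a))"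

definition condition_P ::
  "'a::real_normed_vector set \<Rightarrow> (complex \<Rightarrow> 'a \<Rightarrow> 'a) \<Rightarrow> ('a \<Rightarrow> 'a) \<Rightarrow> ('a \<Rightarrow> 'a \<Rightarrow> 'a) \<Rightarrow> bool" where
  "condition_P A0 sm star qmult \<longleftrightarrow>
     (\<forall>a. (\<forall>\<omega>\<in>Rc A0 sm star qmult. \<forall>x\<in>A0. 0 \<le> \<omega> (qmult (qmult (star x) a) x))
          \<longrightarrow> a \<in> A_plus A0 star qmult)"

end

theory Submission
  imports Defs
begin

text \<open>For \<omega> \<in> R_c, condition (L.3) makes the functionals b \<mapsto> \<omega>(y* b), with y ranging over the
unit ball of the form \<phi>_\<omega>, pointwise bounded. By the uniform boundedness principle
|\<omega>(y* a)| \<le> C \<parallel>y\<parallel> \<parallel>a\<parallel>, so \<phi>_\<omega> is dominated by the norm: every \<omega> \<in> R_c has full closure domain,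
and sufficiency alone already gives full representability. The same estimate lets \<omega>(y* a)
extend by continuity in y to a bounded, positive, invariant sesquilinear form \<Omega>_\<omega> on the
whole space with \<Omega>_\<omega>(a, e) = \<omega>(a).

Under (P) both implications with *-semisimplicity go through the functionals
\<omega>_x(b) = \<omega>(x* b x), which again lie in R_c. If \<Omega>(a, a) = 0 for all \<Omega> \<in> S_A0, then the
Cauchy-Schwarz inequality for \<Omega>_\<omega>_x gives \<omega>_x(a) = 0, so a and -a are positive by (P) and
sufficiency forces a = 0. Conversely, if a \<ge> 0 is killed by all of R_c, then so is every
\<omega>_x, so -a \<ge> 0 by (P); then \<Omega>(a z, z) = 0 for every \<Omega> \<in> S_A0 and z \<in> A0, and polarization
and density give \<Omega>(a, a) = 0.\<close>

lemma pointwise_bounded_imp_bounded_on_ball: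
  fixes F :: "('a::banach \<Rightarrow> 'b::real_normed_vector) set"
  assumes cont: "\<And>f. f \<in> F \<Longrightarrow> continuous_on UNIV f"
    and bounded: "\<And>a. \<exists>K. \<forall>f\<in>F. norm (f a) \<le> K"
  shows "\<exists>a0 r K. r > 0 \<and> (\<forall>f\<in>F. \<forall>a\<in>ball a0 r. norm (f a) \<le> K)"
proof -
  define S where "S n = {a. \<forall>f\<in>F. norm (f a) \<le> real n}" for n :: nat
  have closed_S: "closed (S n)" for n
  proof -
    have "S n = (\<Inter>f\<in>F. {a. norm (f a) \<le> real n})" by (auto simp: S_def)
    moreover have "closed {a. norm (f a) \<le> real n}" if "f \<in> F" for f
      using cont[OF that]
      by (intro closed_Collect_le continuous_intros) (auto simp: continuous_on_eq_continuous_at)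
    ultimately show ?thesis by auto
  qed
  have cover: "\<Union>(range S) = UNIV"
  proof safe
    fix a :: 'a
    obtain K where K: "\<forall>f\<in>F. norm (f a) \<le> K" using bounded by blast
    obtain n :: nat where "K \<le> real n" using real_arch_simple by blast
    then have "a \<in> S n" using K unfolding S_def by (auto intro: order_trans)
    then show "a \<in> \<Union>(range S)" by blast
  qed auto
  have "\<exists>n. interior (S n) \<noteq> {}"
  proof (rule ccontr)
    assume "\<nexists>n. interior (S n) \<noteq> {}"
    then have "euclidean interior_of \<Union>(range S) = {}"
      using closed_S completely_metrizable_space_euclidean
      by (intro Baire_category_alt) (auto simp flip: closed_closedin)
    then show False using cover by simp
  qed
  then obtain n a0 where "a0 \<in> interior (S n)" by blast
  then obtain r where r: "r > 0" "ball a0 r \<subseteq> S n"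
    by (meson open_contains_ball_eq open_interior interior_subset subset_trans)
  then show ?thesis unfolding S_def by blast
qed

lemma uniform_boundedness:
  fixes F :: "('a::banach \<Rightarrow> 'b::real_normed_vector) set"
  assumes lin: "\<And>f. f \<in> F \<Longrightarrow> linear f"
    and cont: "\<And>f. f \<in> F \<Longrightarrow> continuous_on UNIV f"
    and bounded: "\<And>a. \<exists>K. \<forall>f\<in>F. norm (f a) \<le> K"
  shows "\<exists>M. \<forall>f\<in>F. \<forall>a. norm (f a) \<le> M * norm a"
proof -
  obtain a0 r K where r: "r > 0" and K: "\<And>f a. f \<in> F \<Longrightarrow> a \<in> ball a0 r \<Longrightarrow> norm (f a) \<le> K"
    using pointwise_bounded_imp_bounded_on_ball[OF cont bounded] by blast
  have "norm (f a) \<le> (4 * K / r) * norm a" if f: "f \<in> F" for f a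
  proof (cases "a = 0")
    case True
    then show ?thesis using linear_0[OF lin[OF f]] by simp
  next
    case False
    define h where "h = (r / (2 * norm a)) *\<^sub>R a"
    have "norm h = r / 2" using False r by (simp add: h_def)
    then have "a0 + h \<in> ball a0 r" "a0 \<in> ball a0 r" using r by (simp_all add: dist_norm)
    then have "norm (f (a0 + h)) \<le> K" "norm (f a0) \<le> K" using K f by blast+
    moreover have "f h = f (a0 + h) - f a0" using linear_add[OF lin[OF f]] by simp
    ultimately have fh: "norm (f h) \<le> 2 * K" using norm_triangle_ineq4[of "f (a0 + h)" "f a0"] by simp
    have "a = (2 * norm a / r) *\<^sub>R h" using False r by (simp add: h_def)
    then have "norm (f a) = (2 * norm a / r) * norm (f h)"
      using r by (metis linear_scale[OF lin[OF f]] norm_scaleR abs_of_nonneg divide_nonneg_pos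
          mult_nonneg_nonneg norm_ge_zero zero_le_numeral)
    also have "\<dots> \<le> (2 * norm a / r) * (2 * K)" using fh r by (intro mult_left_mono) auto
    also have "\<dots> = (4 * K / r) * norm a" by simp
    finally show ?thesis .
  qed
  then show ?thesis by blast
qed

lemma nonpos_if_multiples_bounded:
  fixes x K :: real
  assumes "\<And>s. s > 0 \<Longrightarrow> s * x \<le> K"
  shows "x \<le> 0"
proof (rule ccontr)
  assume "\<not> x \<le> 0"
  then have "((\<bar>K\<bar> + 1) / x) * x = \<bar>K\<bar> + 1" by simp
  moreover have "((\<bar>K\<bar> + 1) / x) * x \<le> K" using \<open>\<not> x \<le> 0\<close> by (intro assms) simp
  ultimately show False by simp
qed

lemma quadratic_nonneg_imp_linear_coeff_zero:
  fixes u R :: real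
  assumes "R \<ge> 0" and "\<And>t. 0 \<le> t * u + t\<^sup>2 * R"
  shows "u = 0"
proof (rule ccontr)
  assume u: "u \<noteq> 0"
  define s where "s = 1 / (R + 1)"
  have s: "s > 0" "s * R < 1" using assms(1) by (auto simp: s_def)
  have "0 \<le> (- u * s) * u + (- u * s)\<^sup>2 * R" using assms(2) .
  also have "\<dots> = s * u\<^sup>2 * (s * R - 1)" by (simp add: algebra_simps power2_eq_square)
  also have "\<dots> < 0" using s u by (intro mult_pos_neg) auto
  finally show False by simp
qed

lemma complex_quadratics_nonneg_imp_zero:
  fixes p q r :: complex
  assumes r: "0 \<le> r"
    and real_dir: "\<And>t::real. 0 \<le> of_real t * (p + q) + of_real (t\<^sup>2) * r"
    and imag_dir: "\<And>t::real. 0 \<le> - \<i> * of_real t * p + \<i> * of_real t * q + of_real (t\<^sup>2) * r"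
  shows "p = 0"
proof -
  have ir: "Im r = 0" "Re r \<ge> 0" using r by (auto simp: less_eq_complex_def)
  have "0 \<le> t * Re (p + q) + t\<^sup>2 * Re r" for t
    using real_dir[of t] ir by (simp add: less_eq_complex_def)
  then have "Re (p + q) = 0" by (rule quadratic_nonneg_imp_linear_coeff_zero[OF ir(2)])
  moreover have "0 \<le> t * (Im p - Im q) + t\<^sup>2 * Re r" for t
    using imag_dir[of t] ir by (simp add: less_eq_complex_def algebra_simps)
  then have "Im p - Im q = 0" by (rule quadratic_nonneg_imp_linear_coeff_zero[OF ir(2)])
  moreover have "Im (p + q) = 0" using real_dir[of 1] ir by (simp add: less_eq_complex_def)
  moreover have "Re q - Re p = 0" using imag_dir[of 1] ir by (simp add: less_eq_complex_def algebra_simps)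
  ultimately show ?thesis by (simp add: complex_eq_iff)
qed

lemma complex_nonneg_limit:
  fixes f :: "nat \<Rightarrow> complex"
  assumes "\<And>n. 0 \<le> f n" and "f \<longlonglongrightarrow> L"
  shows "0 \<le> L"
proof -
  have nonneg_Reals: "{z::complex. 0 \<le> z} = \<real>\<^sub>\<ge>\<^sub>0"
    by (auto simp: complex_nonneg_Reals_iff less_eq_complex_def)
  show ?thesis
    using closed_sequentially[OF closed_nonneg_Reals_complex, of f L] assms
    by (simp flip: nonneg_Reals)
qed

lemma sesquilinear_form_expand:
  assumes "sesquilinear_form sm \<Omega>"
  shows "\<Omega> (a + sm s b) (a + sm s b) = \<Omega> a a + cnj s * \<Omega> a b + s * \<Omega> b a + (s * cnj s) * \<Omega> b b"
  using assms unfolding sesquilinear_form_def by (simp add: algebra_simps)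

lemma positive_sesquilinear_form_null_vector:
  assumes ses: "sesquilinear_form sm \<Omega>" and pos: "\<And>c. 0 \<le> \<Omega> c c" and null: "\<Omega> a a = 0"
  shows "\<Omega> a b = 0"
proof (rule complex_quadratics_nonneg_imp_zero)
  show "0 \<le> \<Omega> b b" by (rule pos)
  fix t :: real
  have "0 \<le> \<Omega> (a + sm (of_real t) b) (a + sm (of_real t) b)" by (rule pos)
  also have "\<dots> = of_real t * (\<Omega> a b + \<Omega> b a) + of_real (t\<^sup>2) * \<Omega> b b"
    using sesquilinear_form_expand[OF ses] null by (simp add: algebra_simps power2_eq_square)
  finally show "0 \<le> of_real t * (\<Omega> a b + \<Omega> b a) + of_real (t\<^sup>2) * \<Omega> b b" .
  have "0 \<le> \<Omega> (a + sm (\<i> * of_real t) b) (a + sm (\<i> * of_real t) b)" by (rule pos)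
  also have "\<dots> = - \<i> * of_real t * \<Omega> a b + \<i> * of_real t * \<Omega> b a + of_real (t\<^sup>2) * \<Omega> b b"
    using sesquilinear_form_expand[OF ses] null by (simp add: algebra_simps power2_eq_square)
  finally show "0 \<le> - \<i> * of_real t * \<Omega> a b + \<i> * of_real t * \<Omega> b a + of_real (t\<^sup>2) * \<Omega> b b" .
qed

locale unital_banach_qsa =
  fixes A0 :: "'a::banach set" and sm :: "complex \<Rightarrow> 'a \<Rightarrow> 'a"
    and star :: "'a \<Rightarrow> 'a" and qmult :: "'a \<Rightarrow> 'a \<Rightarrow> 'a" and e :: 'a
  assumes banach: "banach_quasi_star_algebra A0 sm star qmult"
    and unit: "qsa_unit A0 qmult e"
begin

lemma normed: "normed_quasi_star_algebra A0 sm star qmult"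
  using banach by (simp add: banach_quasi_star_algebra_def)
lemma qsa: "quasi_star_algebra A0 sm star qmult"
  using normed by (simp add: normed_quasi_star_algebra_def)
lemma complex_structure: "complex_structure sm"
  using qsa by (simp add: quasi_star_algebra_def)

lemma sm_of_real: "sm (complex_of_real r) a = r *\<^sub>R a"
  using complex_structure by (simp add: complex_structure_def)
lemma sm_add: "sm c (a + b) = sm c a + sm c b"
  using complex_structure by (simp add: complex_structure_def)
lemma sm_mult: "sm (c * d) a = sm c (sm d a)"
  using complex_structure by (simp add: complex_structure_def)
lemma norm_sm: "norm (sm c a) = cmod c * norm a"
  using complex_structure by (simp add: complex_structure_def)
lemma sm_minus_one: "sm (-1) a = - a"
  using sm_of_real[of "-1" a] by simp
lemma sm_scaleR: "sm c (r *\<^sub>R a) = r *\<^sub>R sm c a"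
  by (metis sm_mult sm_of_real mult.commute)
lemma bounded_linear_sm: "bounded_linear (sm c)"
  by (rule bounded_linear_intro[where K="cmod c"]) (auto simp: sm_add sm_scaleR norm_sm)

lemma A0_add: "x \<in> A0 \<Longrightarrow> y \<in> A0 \<Longrightarrow> x + y \<in> A0"
  using qsa by (simp add: quasi_star_algebra_def)
lemma A0_sm: "x \<in> A0 \<Longrightarrow> sm c x \<in> A0"
  using qsa by (simp add: quasi_star_algebra_def)
lemma A0_diff: "x \<in> A0 \<Longrightarrow> y \<in> A0 \<Longrightarrow> x - y \<in> A0"
  using A0_add[of x "- y"] A0_sm[of y "-1"] by (simp add: sm_minus_one)
lemma A0_qmult: "x \<in> A0 \<Longrightarrow> y \<in> A0 \<Longrightarrow> qmult x y \<in> A0"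
  using qsa by (simp add: quasi_star_algebra_def)
lemma A0_star: "x \<in> A0 \<Longrightarrow> star x \<in> A0"
  using qsa by (simp add: quasi_star_algebra_def)

lemma star_add: "star (a + b) = star a + star b"
  using qsa by (simp add: quasi_star_algebra_def)
lemma star_sm: "star (sm c a) = sm (cnj c) (star a)"
  using qsa by (simp add: quasi_star_algebra_def)
lemma star_star [simp]: "star (star a) = a"
  using qsa by (simp add: quasi_star_algebra_def)
lemma star_diff: "star (a - b) = star a - star b"
  using star_add[of "a - b" b] by (simp add: algebra_simps)
lemma norm_star: "norm (star a) = norm a"
  using normed by (simp add: normed_quasi_star_algebra_def)
lemma bounded_linear_star: "bounded_linear star"
  by (rule bounded_linear_intro[where K=1])
     (auto simp: star_add norm_star simp flip: sm_of_real intro: star_sm[THEN trans])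

lemma closure_A0: "closure A0 = UNIV"
  using normed by (simp add: normed_quasi_star_algebra_def)
lemma continuous_on_qmult_right: "x \<in> A0 \<Longrightarrow> continuous_on UNIV (\<lambda>a. qmult a x)"
  using normed by (simp add: normed_quasi_star_algebra_def)
lemma continuous_on_qmult_left: "x \<in> A0 \<Longrightarrow> continuous_on UNIV (\<lambda>a. qmult x a)"
  using normed by (simp add: normed_quasi_star_algebra_def)

lemma qmult_add_left: "x \<in> A0 \<Longrightarrow> qmult (a + b) x = qmult a x + qmult b x"
  using qsa by (simp add: quasi_star_algebra_def)
lemma qmult_add_right: "x \<in> A0 \<Longrightarrow> qmult x (a + b) = qmult x a + qmult x b"
  using qsa by (simp add: quasi_star_algebra_def)
lemma qmult_add_right_A0: "x \<in> A0 \<Longrightarrow> y \<in> A0 \<Longrightarrow> qmult a (x + y) = qmult a x + qmult a y"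
  using qsa by (simp add: quasi_star_algebra_def)
lemma qmult_add_left_A0: "x \<in> A0 \<Longrightarrow> y \<in> A0 \<Longrightarrow> qmult (x + y) a = qmult x a + qmult y a"
  using qsa by (simp add: quasi_star_algebra_def)
lemma qmult_sm_left: "x \<in> A0 \<Longrightarrow> qmult (sm c a) x = sm c (qmult a x)"
  using qsa by (simp add: quasi_star_algebra_def)
lemma qmult_sm_right: "x \<in> A0 \<Longrightarrow> qmult x (sm c a) = sm c (qmult x a)"
  using qsa by (simp add: quasi_star_algebra_def)
lemma qmult_sm_right_A0: "x \<in> A0 \<Longrightarrow> qmult a (sm c x) = sm c (qmult a x)"
  using qsa by (simp add: quasi_star_algebra_def)
lemma qmult_sm_left_A0: "x \<in> A0 \<Longrightarrow> qmult (sm c x) a = sm c (qmult x a)"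
  using qsa by (simp add: quasi_star_algebra_def)
lemma qmult_diff_left_A0: "x \<in> A0 \<Longrightarrow> y \<in> A0 \<Longrightarrow> qmult (x - y) a = qmult x a - qmult y a"
  using qmult_add_left_A0[of "x - y" y a] A0_diff by (simp add: algebra_simps)
lemma qmult_uminus_right: "x \<in> A0 \<Longrightarrow> qmult x (- a) = - qmult x a"
  using qmult_add_right[of x a "- a"] qmult_add_right[of x 0 0] by (simp add: add_eq_0_iff)
lemma qmult_uminus_left: "x \<in> A0 \<Longrightarrow> qmult (- a) x = - qmult a x"
  using qmult_add_left[of x a "- a"] qmult_add_left[of x 0 0] by (simp add: add_eq_0_iff)

lemma qmult_assoc_mid: "x \<in> A0 \<Longrightarrow> y \<in> A0 \<Longrightarrow> qmult (qmult x a) y = qmult x (qmult a y)"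
  using qsa by (simp add: quasi_star_algebra_def)
lemma qmult_assoc_left: "x \<in> A0 \<Longrightarrow> y \<in> A0 \<Longrightarrow> qmult a (qmult x y) = qmult (qmult a x) y"
  using qsa by (simp add: quasi_star_algebra_def)
lemma qmult_assoc_right: "x \<in> A0 \<Longrightarrow> y \<in> A0 \<Longrightarrow> qmult (qmult x y) a = qmult x (qmult y a)"
  using qsa by (simp add: quasi_star_algebra_def)
lemma star_qmult: "x \<in> A0 \<Longrightarrow> star (qmult a x) = qmult (star x) (star a)"
  using qsa by (simp add: quasi_star_algebra_def)

lemma unit_A0: "e \<in> A0"
  using unit by (simp add: qsa_unit_def)
lemma qmult_unit_right [simp]: "qmult a e = a"
  using unit by (simp add: qsa_unit_def)
lemma qmult_unit_left [simp]: "qmult e a = a"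
  using unit by (simp add: qsa_unit_def)
lemma star_unit [simp]: "star e = e"
  using star_qmult[OF unit_A0, of "star e"] by simp

lemma A0_sequence_tendsto: obtains X where "\<And>n. X n \<in> A0" "X \<longlonglongrightarrow> a"
  using closure_A0 closure_sequential by (metis UNIV_I)

definition approx_seq :: "'a \<Rightarrow> nat \<Rightarrow> 'a" where
  "approx_seq b = (SOME X. (\<forall>n. X n \<in> A0) \<and> X \<longlonglongrightarrow> b)"

lemma approx_seq: "approx_seq b n \<in> A0" "approx_seq b \<longlonglongrightarrow> b"
proof -
  have "\<exists>X. (\<forall>n. X n \<in> A0) \<and> X \<longlonglongrightarrow> b" using A0_sequence_tendsto by metis
  then have "(\<forall>n. approx_seq b n \<in> A0) \<and> approx_seq b \<longlonglongrightarrow> b"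
    unfolding approx_seq_def by (rule someI_ex)
  then show "approx_seq b n \<in> A0" "approx_seq b \<longlonglongrightarrow> b" by auto
qed

lemma nonneg_on_A_plus:
  fixes \<psi> :: "'a \<Rightarrow> complex"
  assumes add: "\<And>a b. \<psi> (a + b) = \<psi> a + \<psi> b" and cont: "continuous_on UNIV \<psi>"
    and squares: "\<And>x. x \<in> A0 \<Longrightarrow> 0 \<le> \<psi> (qmult (star x) x)"
    and a: "a \<in> A_plus A0 star qmult"
  shows "0 \<le> \<psi> a"
proof -
  have "\<psi> 0 = 0" using add[of 0 0] by simp
  then have sum: "\<psi> (\<Sum>k<n. f k) = (\<Sum>k<n. \<psi> (f k))" for f :: "nat \<Rightarrow> 'a" and n
    by (induction n) (simp_all add: add)
  have A0_plus: "0 \<le> \<psi> b" if b: "b \<in> A0_plus A0 star qmult" for b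
  proof -
    obtain n :: nat and xs where "\<forall>k<n. xs k \<in> A0" "b = (\<Sum>k<n. qmult (star (xs k)) (xs k))"
      using b unfolding A0_plus_def mem_Collect_eq by blast
    then show ?thesis by (simp add: sum) (rule sum_nonneg, simp add: squares)
  qed
  obtain X where X: "\<And>n. X n \<in> A0_plus A0 star qmult" "X \<longlonglongrightarrow> a"
    using a unfolding A_plus_def closure_sequential by blast
  show ?thesis
    using complex_nonneg_limit[OF A0_plus[OF X(1)] continuous_on_tendsto_compose[OF cont X(2)]]
    by simp
qed

definition sandwich :: "('a \<Rightarrow> complex) \<Rightarrow> 'a \<Rightarrow> 'a \<Rightarrow> complex" where
  "sandwich \<omega> x b = \<omega> (qmult (qmult (star x) b) x)"

lemma sandwich_qmult:
  assumes "x \<in> A0" "y \<in> A0" "z \<in> A0"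
  shows "qmult (qmult (star x) (qmult (qmult (star y) b) z)) x
       = qmult (qmult (star (qmult y x)) b) (qmult z x)"
proof -
  have "qmult (qmult (star (qmult y x)) b) (qmult z x)
      = qmult (qmult (star x) (qmult (star y) b)) (qmult z x)"
    using assms by (simp add: star_qmult qmult_assoc_right A0_star)
  also have "\<dots> = qmult (qmult (qmult (star x) (qmult (star y) b)) z) x"
    using assms by (simp add: qmult_assoc_left)
  also have "\<dots> = qmult (qmult (star x) (qmult (qmult (star y) b) z)) x"
    using assms by (simp add: qmult_assoc_mid A0_star)
  finally show ?thesis by simp
qed

end

locale Rc_functional = unital_banach_qsa +
  fixes \<omega> :: "'a \<Rightarrow> complex"
  assumes in_Rc: "\<omega> \<in> Rc A0 sm star qmult"
begin

lemma representable: "representable A0 sm star qmult \<omega>"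
  using in_Rc by (simp add: Rc_def)
lemma continuous_on_omega: "continuous_on UNIV \<omega>"
  using in_Rc by (simp add: Rc_def)
lemma omega_add: "\<omega> (a + b) = \<omega> a + \<omega> b"
  using representable by (simp add: representable_def clinear_fun_def)
lemma omega_sm: "\<omega> (sm c a) = c * \<omega> a"
  using representable by (simp add: representable_def clinear_fun_def)
lemma omega_diff: "\<omega> (a - b) = \<omega> a - \<omega> b"
  using omega_add[of "a - b" b] by (simp add: algebra_simps)
lemma omega_uminus: "\<omega> (- a) = - \<omega> a"
  using omega_diff[of 0 a] omega_diff[of 0 0] by simp
lemma omega_square_nonneg: "x \<in> A0 \<Longrightarrow> 0 \<le> \<omega> (qmult (star x) x)"
  using representable by (simp add: representable_def)
lemma omega_hermitian_sandwich:
  "x \<in> A0 \<Longrightarrow> y \<in> A0 \<Longrightarrow> \<omega> (qmult (qmult (star y) (star a)) x) = cnj (\<omega> (qmult (qmult (star x) a) y))"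
  using representable by (simp add: representable_def)
lemma omega_bounded_by_square:
  "\<exists>\<gamma>>0. \<forall>x\<in>A0. cmod (\<omega> (qmult (star a) x)) \<le> \<gamma> * sqrt (cmod (\<omega> (qmult (star x) x)))"
  using representable by (simp add: representable_def)
lemma omega_hermitian: "y \<in> A0 \<Longrightarrow> \<omega> (qmult (star y) a) = cnj (\<omega> (qmult (star a) y))"
  using omega_hermitian_sandwich[of y e a] unit_A0 by simp

lemma omega_sm_star_left: "y \<in> A0 \<Longrightarrow> \<omega> (qmult (star (sm c y)) a) = cnj c * \<omega> (qmult (star y) a)"
  by (simp add: star_sm qmult_sm_left_A0 A0_star omega_sm)

lemma linear_omega_star_left: "y \<in> A0 \<Longrightarrow> linear (\<lambda>a. \<omega> (qmult (star y) a))"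
  by (rule linearI)
     (auto simp: qmult_add_right A0_star omega_add simp flip: sm_of_real
           simp: qmult_sm_right omega_sm scaleR_conv_of_real)

lemma continuous_on_omega_star_left: "y \<in> A0 \<Longrightarrow> continuous_on UNIV (\<lambda>a. \<omega> (qmult (star y) a))"
  using continuous_on_compose2[OF continuous_on_omega continuous_on_qmult_left[OF A0_star]] by auto

lemma omega_star_left_uniform_bound:
  "\<exists>M>0. \<forall>y\<in>A0. cmod (\<omega> (qmult (star y) y)) \<le> 1 \<longrightarrow> (\<forall>a. cmod (\<omega> (qmult (star y) a)) \<le> M * norm a)"
proof -
  define F where "F = {(\<lambda>a. \<omega> (qmult (star y) a)) | y. y \<in> A0 \<and> cmod (\<omega> (qmult (star y) y)) \<le> 1}"
  have "\<exists>M. \<forall>f\<in>F. \<forall>a. norm (f a) \<le> M * norm a"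
  proof (rule uniform_boundedness)
    show "linear f" "continuous_on UNIV f" if "f \<in> F" for f
      using that linear_omega_star_left continuous_on_omega_star_left unfolding F_def by auto
    fix a
    obtain \<gamma> where \<gamma>: "\<gamma> > 0" "\<forall>x\<in>A0. cmod (\<omega> (qmult (star a) x)) \<le> \<gamma> * sqrt (cmod (\<omega> (qmult (star x) x)))"
      using omega_bounded_by_square[of a] by blast
    have "norm (f a) \<le> \<gamma>" if "f \<in> F" for f
    proof -
      obtain y where y: "f = (\<lambda>a. \<omega> (qmult (star y) a))" "y \<in> A0" "cmod (\<omega> (qmult (star y) y)) \<le> 1"
        using \<open>f \<in> F\<close> unfolding F_def by blast
      have "norm (f a) = cmod (\<omega> (qmult (star a) y))" using omega_hermitian[OF y(2), of a] y(1) by simp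
      also have "\<dots> \<le> \<gamma> * sqrt (cmod (\<omega> (qmult (star y) y)))" using \<gamma>(2) y(2) by blast
      also have "\<dots> \<le> \<gamma>" using y(3) \<gamma>(1) by (simp add: mult_left_le)
      finally show ?thesis .
    qed
    then show "\<exists>K. \<forall>f\<in>F. norm (f a) \<le> K" by blast
  qed
  then obtain M where M: "\<forall>f\<in>F. \<forall>a. norm (f a) \<le> M * norm a" by blast
  have "cmod (\<omega> (qmult (star y) a)) \<le> max M 1 * norm a"
    if "y \<in> A0" "cmod (\<omega> (qmult (star y) y)) \<le> 1" for y a
  proof -
    have in_F: "(\<lambda>a. \<omega> (qmult (star y) a)) \<in> F" using that unfolding F_def by blast
    have "cmod (\<omega> (qmult (star y) a)) \<le> M * norm a" using M[rule_format, OF in_F, of a] by simp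
    also have "\<dots> \<le> max M 1 * norm a" by (intro mult_right_mono) auto
    finally show ?thesis .
  qed
  then show ?thesis by (intro exI[of _ "max M 1"]) auto
qed

text \<open>Scaling y by s > 0 with s^2 \<phi>_\<omega>(y, y) \<le> 1 gives s |\<omega>(y* a)| \<le> M \<parallel>a\<parallel>; letting s \<rightarrow> \<infinity>
when \<phi>_\<omega>(y, y) = 0, and taking s = \<phi>_\<omega>(y, y)^(-1/2) otherwise.\<close>
lemma omega_star_left_bound_by_square:
  "\<exists>M>0. \<forall>y\<in>A0. \<forall>a. cmod (\<omega> (qmult (star y) a)) \<le> M * sqrt (cmod (\<omega> (qmult (star y) y))) * norm a"
proof -
  obtain M where M: "M > 0" "\<And>y a. y \<in> A0 \<Longrightarrow> cmod (\<omega> (qmult (star y) y)) \<le> 1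
      \<Longrightarrow> cmod (\<omega> (qmult (star y) a)) \<le> M * norm a"
    using omega_star_left_uniform_bound by blast
  have scaled: "s * cmod (\<omega> (qmult (star y) a)) \<le> M * norm a"
    if y: "y \<in> A0" and "s > 0" "s\<^sup>2 * cmod (\<omega> (qmult (star y) y)) \<le> 1" for y a s
    using M(2)[OF A0_sm[OF y, of "of_real s"], of a] that
    by (simp add: omega_sm_star_left qmult_sm_right A0_star omega_sm norm_mult power2_eq_square)
  have "cmod (\<omega> (qmult (star y) a)) \<le> M * sqrt (cmod (\<omega> (qmult (star y) y))) * norm a"
    if y: "y \<in> A0" for y a
  proof (cases "\<omega> (qmult (star y) y) = 0")
    case True
    then have "cmod (\<omega> (qmult (star y) a)) \<le> 0"
      using scaled[OF y] by (intro nonpos_if_multiples_bounded[where K = "M * norm a"]) simp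
    then show ?thesis using M(1) by simp
  next
    case False
    define t where "t = cmod (\<omega> (qmult (star y) y))"
    have "t > 0" using False by (simp add: t_def)
    then have "(1 / sqrt t) * cmod (\<omega> (qmult (star y) a)) \<le> M * norm a"
      using scaled[OF y, of "1 / sqrt t"] by (simp add: t_def power_divide)
    then show ?thesis using \<open>t > 0\<close> by (simp add: t_def field_simps)
  qed
  then show ?thesis using M(1) by blast
qed

text \<open>Taking a = y above bounds \<phi>_\<omega>(y, y)^(1/2) by M \<parallel>y\<parallel>.\<close>
lemma omega_star_left_bound:
  "\<exists>C>0. \<forall>y\<in>A0. \<forall>a. cmod (\<omega> (qmult (star y) a)) \<le> C * norm y * norm a"
proof -
  obtain M where M: "M > 0"
    "\<And>y a. y \<in> A0 \<Longrightarrow> cmod (\<omega> (qmult (star y) a)) \<le> M * sqrt (cmod (\<omega> (qmult (star y) y))) * norm a"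
    using omega_star_left_bound_by_square by blast
  have sqrt_bound: "sqrt (cmod (\<omega> (qmult (star y) y))) \<le> M * norm y" if y: "y \<in> A0" for y
  proof -
    define t where "t = sqrt (cmod (\<omega> (qmult (star y) y)))"
    have "t * t \<le> t * (M * norm y)"
      using M(2)[OF y, of y] by (simp add: t_def mult_ac)
    moreover have "t \<ge> 0" by (simp add: t_def)
    ultimately show ?thesis
      unfolding t_def[symmetric] using M(1)
      by (cases "t = 0") (auto simp: mult_le_cancel_left_pos)
  qed
  have "cmod (\<omega> (qmult (star y) a)) \<le> (M * M) * norm y * norm a" if y: "y \<in> A0" for y a
  proof -
    have "cmod (\<omega> (qmult (star y) a)) \<le> M * sqrt (cmod (\<omega> (qmult (star y) y))) * norm a"
      using M(2)[OF y] .
    also have "\<dots> \<le> M * (M * norm y) * norm a"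
      using sqrt_bound[OF y] M(1) by (intro mult_right_mono mult_left_mono) auto
    finally show ?thesis by (simp add: mult_ac)
  qed
  then show ?thesis using M(1) by (intro exI[of _ "M * M"]) auto
qed

lemma closure_dom_UNIV: "closure_dom A0 star qmult \<omega> = UNIV"
proof -
  obtain C where C: "C > 0" "\<And>y a. y \<in> A0 \<Longrightarrow> cmod (\<omega> (qmult (star y) a)) \<le> C * norm y * norm a"
    using omega_star_left_bound by blast
  have "a \<in> closure_dom A0 star qmult \<omega>" for a
  proof -
    obtain X where X: "\<And>n. X n \<in> A0" "X \<longlonglongrightarrow> a" using A0_sequence_tendsto by blast
    have "\<exists>N. \<forall>n\<ge>N. \<forall>m\<ge>N. cmod (\<omega> (qmult (star (X n - X m)) (X n - X m))) < \<epsilon>"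
      if "\<epsilon> > 0" for \<epsilon>
    proof -
      obtain N where N: "\<forall>m\<ge>N. \<forall>n\<ge>N. dist (X m) (X n) < sqrt (\<epsilon> / C)"
        using LIMSEQ_imp_Cauchy[OF X(2)] \<open>\<epsilon> > 0\<close> C(1) unfolding Cauchy_def
        by (meson divide_pos_pos real_sqrt_gt_zero)
      have "cmod (\<omega> (qmult (star (X n - X m)) (X n - X m))) < \<epsilon>" if "n \<ge> N" "m \<ge> N" for n m
      proof -
        have "cmod (\<omega> (qmult (star (X n - X m)) (X n - X m))) \<le> C * (norm (X n - X m))\<^sup>2"
          using C(2)[of "X n - X m"] A0_diff X(1) by (simp add: power2_eq_square mult.assoc)
        also have "\<dots> < C * (sqrt (\<epsilon> / C))\<^sup>2"
          using N that C(1) by (intro mult_strict_left_mono power_strict_mono) (auto simp: dist_norm)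
        also have "\<dots> = \<epsilon>" using C(1) \<open>\<epsilon> > 0\<close> by simp
        finally show ?thesis .
      qed
      then show ?thesis by blast
    qed
    then show ?thesis unfolding closure_dom_def using X by blast
  qed
  then show ?thesis by blast
qed

lemma nonneg_A_plus: "a \<in> A_plus A0 star qmult \<Longrightarrow> 0 \<le> \<omega> a"
  by (rule nonneg_on_A_plus) (auto simp: omega_add continuous_on_omega omega_square_nonneg)

lemma sandwich_in_Rc:
  assumes x: "x \<in> A0"
  shows "sandwich \<omega> x \<in> Rc A0 sm star qmult"
proof -
  have square: "sandwich \<omega> x (qmult (star y) y) = \<omega> (qmult (star (qmult y x)) (qmult y x))"
    if "y \<in> A0" for y
    using sandwich_qmult[OF x that that, of e] by (simp add: sandwich_def)
  have "clinear_fun sm (sandwich \<omega> x)"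
    unfolding clinear_fun_def sandwich_def using x
    by (simp add: qmult_add_right qmult_add_left A0_star omega_add qmult_sm_right qmult_sm_left omega_sm)
  moreover have "\<forall>y\<in>A0. 0 \<le> sandwich \<omega> x (qmult (star y) y)"
    using square omega_square_nonneg A0_qmult x by simp
  moreover have "sandwich \<omega> x (qmult (qmult (star z) (star b)) y)
      = cnj (sandwich \<omega> x (qmult (qmult (star y) b) z))" if "y \<in> A0" "z \<in> A0" for y z b
    using sandwich_qmult[OF x] omega_hermitian_sandwich[of "qmult y x" "qmult z x" b] A0_qmult x that
    by (simp add: sandwich_def)
  moreover have "\<exists>\<gamma>>0. \<forall>y\<in>A0. cmod (sandwich \<omega> x (qmult (star b) y))
      \<le> \<gamma> * sqrt (cmod (sandwich \<omega> x (qmult (star y) y)))" for b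
  proof -
    obtain \<gamma> where \<gamma>: "\<gamma> > 0"
      "\<forall>u\<in>A0. cmod (\<omega> (qmult (star (qmult b x)) u)) \<le> \<gamma> * sqrt (cmod (\<omega> (qmult (star u) u)))"
      using omega_bounded_by_square[of "qmult b x"] by blast
    have "sandwich \<omega> x (qmult (star b) y) = \<omega> (qmult (star (qmult b x)) (qmult y x))" if "y \<in> A0" for y
      using x that by (simp add: sandwich_def star_qmult qmult_assoc_left qmult_assoc_mid A0_star)
    then show ?thesis using \<gamma> A0_qmult x square by auto
  qed
  moreover have "continuous_on UNIV (sandwich \<omega> x)"
  proof -
    have "continuous_on UNIV (\<lambda>b. qmult (qmult (star x) b) x)"
      using continuous_on_compose2[OF continuous_on_qmult_right[OF x]
          continuous_on_qmult_left[OF A0_star[OF x]]] by auto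
    then show ?thesis
      unfolding sandwich_def using continuous_on_compose2[OF continuous_on_omega] by auto
  qed
  ultimately show ?thesis unfolding Rc_def representable_def by blast
qed

definition bound_const :: real where
  "bound_const = (SOME C. C > 0 \<and> (\<forall>y\<in>A0. \<forall>a. cmod (\<omega> (qmult (star y) a)) \<le> C * norm y * norm a))"

lemma bound_const: "bound_const > 0"
  "y \<in> A0 \<Longrightarrow> cmod (\<omega> (qmult (star y) a)) \<le> bound_const * norm y * norm a"
proof -
  have "bound_const > 0 \<and> (\<forall>y\<in>A0. \<forall>a. cmod (\<omega> (qmult (star y) a)) \<le> bound_const * norm y * norm a)"
    unfolding bound_const_def using omega_star_left_bound by (rule someI_ex)
  then show "bound_const > 0" "y \<in> A0 \<Longrightarrow> cmod (\<omega> (qmult (star y) a)) \<le> bound_const * norm y * norm a"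
    by auto
qed

lemma lipschitz_omega_star_left:
  "(bound_const * norm a)-lipschitz_on A0 (\<lambda>y. \<omega> (qmult (star y) a))"
proof (rule lipschitz_onI)
  fix y z assume "y \<in> A0" "z \<in> A0"
  then have "\<omega> (qmult (star y) a) - \<omega> (qmult (star z) a) = \<omega> (qmult (star (y - z)) a)"
    by (simp add: star_diff qmult_diff_left_A0 A0_star omega_diff)
  then show "dist (\<omega> (qmult (star y) a)) (\<omega> (qmult (star z) a)) \<le> bound_const * norm a * dist y z"
    using bound_const(2)[of "y - z" a] A0_diff \<open>y \<in> A0\<close> \<open>z \<in> A0\<close>
    by (simp add: dist_norm mult_ac)
qed (use bound_const(1) in simp)

text \<open>\<Omega>_\<omega>(a, b) is the limit of \<omega>(y_n* a) along any sequence y_n in A0 tending to b;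
the Lipschitz bound makes it independent of the sequence.\<close>
definition extended_form :: "'a \<Rightarrow> 'a \<Rightarrow> complex" where
  "extended_form a b = lim (\<lambda>n. \<omega> (qmult (star (approx_seq b n)) a))"

lemma extended_form_tendsto:
  assumes Y: "\<And>n. Y n \<in> A0" "Y \<longlonglongrightarrow> b"
  shows "(\<lambda>n. \<omega> (qmult (star (Y n)) a)) \<longlonglongrightarrow> extended_form a b"
proof -
  let ?f = "\<lambda>y. \<omega> (qmult (star y) a)"
  have uc: "uniformly_continuous_on A0 ?f"
    by (rule lipschitz_on_uniformly_continuous[OF lipschitz_omega_star_left])
  have "(\<lambda>n. ?f (approx_seq b n)) \<longlonglongrightarrow> extended_form a b"
    using uniformly_continuous_on_Cauchy[OF uc LIMSEQ_imp_Cauchy[OF approx_seq(2)] approx_seq(1)]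
    unfolding extended_form_def by (simp add: Cauchy_convergent_iff convergent_LIMSEQ_iff)
  moreover have "(\<lambda>n. ?f (Y n) - ?f (approx_seq b n)) \<longlonglongrightarrow> 0"
  proof (rule Lim_null_comparison)
    show "\<forall>\<^sub>F n in sequentially. norm (?f (Y n) - ?f (approx_seq b n))
        \<le> bound_const * norm a * norm (Y n - approx_seq b n)"
      using lipschitz_onD[OF lipschitz_omega_star_left Y(1) approx_seq(1)] by (simp add: dist_norm)
    have "(\<lambda>n. Y n - approx_seq b n) \<longlonglongrightarrow> 0"
      using tendsto_diff[OF Y(2) approx_seq(2)[of b]] by simp
    then show "(\<lambda>n. bound_const * norm a * norm (Y n - approx_seq b n)) \<longlonglongrightarrow> 0"
      by (intro tendsto_mult_right_zero tendsto_norm_zero)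
  qed
  ultimately have "(\<lambda>n. (?f (Y n) - ?f (approx_seq b n)) + ?f (approx_seq b n)) \<longlonglongrightarrow> 0 + extended_form a b"
    by (intro tendsto_add)
  then show ?thesis by simp
qed

lemma extended_form_A0: "y \<in> A0 \<Longrightarrow> extended_form a y = \<omega> (qmult (star y) a)"
  using extended_form_tendsto[of "\<lambda>_. y" y a] LIMSEQ_unique[OF _ tendsto_const] by auto

lemma extended_form_add_left: "extended_form (a + a') b = extended_form a b + extended_form a' b"
proof -
  have "(\<lambda>n. \<omega> (qmult (star (approx_seq b n)) (a + a'))) \<longlonglongrightarrow> extended_form a b + extended_form a' b"
    using tendsto_add[OF extended_form_tendsto extended_form_tendsto, OF approx_seq approx_seq]
    by (simp add: qmult_add_right A0_star approx_seq omega_add)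
  then show ?thesis using extended_form_tendsto[OF approx_seq] LIMSEQ_unique by blast
qed

lemma extended_form_sm_left: "extended_form (sm z a) b = z * extended_form a b"
proof -
  have "(\<lambda>n. \<omega> (qmult (star (approx_seq b n)) (sm z a))) \<longlonglongrightarrow> z * extended_form a b"
    using tendsto_mult_left[OF extended_form_tendsto, OF approx_seq]
    by (simp add: qmult_sm_right A0_star approx_seq omega_sm)
  then show ?thesis using extended_form_tendsto[OF approx_seq] LIMSEQ_unique by blast
qed

lemma extended_form_add_right: "extended_form a (b + c) = extended_form a b + extended_form a c"
proof -
  have "(\<lambda>n. \<omega> (qmult (star (approx_seq b n + approx_seq c n)) a)) \<longlonglongrightarrow> extended_form a b + extended_form a c"
    using tendsto_add[OF extended_form_tendsto extended_form_tendsto, OF approx_seq approx_seq]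
    by (simp add: star_add qmult_add_left_A0 A0_star approx_seq omega_add)
  moreover have "(\<lambda>n. \<omega> (qmult (star (approx_seq b n + approx_seq c n)) a)) \<longlonglongrightarrow> extended_form a (b + c)"
    by (intro extended_form_tendsto A0_add approx_seq tendsto_add)
  ultimately show ?thesis using LIMSEQ_unique by blast
qed

lemma extended_form_sm_right: "extended_form a (sm z b) = cnj z * extended_form a b"
proof -
  have "(\<lambda>n. \<omega> (qmult (star (sm z (approx_seq b n))) a)) \<longlonglongrightarrow> cnj z * extended_form a b"
    using tendsto_mult_left[OF extended_form_tendsto, OF approx_seq]
    by (simp add: omega_sm_star_left approx_seq)
  moreover have "(\<lambda>n. \<omega> (qmult (star (sm z (approx_seq b n))) a)) \<longlonglongrightarrow> extended_form a (sm z b)"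
    by (intro extended_form_tendsto A0_sm approx_seq bounded_linear.tendsto[OF bounded_linear_sm])
  ultimately show ?thesis using LIMSEQ_unique by blast
qed

lemma sesquilinear_extended_form: "sesquilinear_form sm extended_form"
  unfolding sesquilinear_form_def
  by (simp add: extended_form_add_left extended_form_add_right
      extended_form_sm_left extended_form_sm_right)

lemma extended_form_diff_left: "extended_form (a - a') b = extended_form a b - extended_form a' b"
  using extended_form_add_left[of "a - a'" a' b] by (simp add: eq_diff_eq)

lemma extended_form_diff_right: "extended_form a (b - c) = extended_form a b - extended_form a c"
  using extended_form_add_right[of a "b - c" c] by (simp add: eq_diff_eq)

lemma norm_extended_form_le: "cmod (extended_form a b) \<le> bound_const * norm b * norm a"
proof (rule tendsto_le[OF trivial_limit_sequentially])
  show "(\<lambda>n. cmod (\<omega> (qmult (star (approx_seq b n)) a))) \<longlonglongrightarrow> cmod (extended_form a b)"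
    by (intro tendsto_norm extended_form_tendsto approx_seq)
  show "(\<lambda>n. bound_const * norm (approx_seq b n) * norm a) \<longlonglongrightarrow> bound_const * norm b * norm a"
    by (intro tendsto_intros approx_seq)
  show "\<forall>\<^sub>F n in sequentially. cmod (\<omega> (qmult (star (approx_seq b n)) a))
      \<le> bound_const * norm (approx_seq b n) * norm a"
    using bound_const(2)[OF approx_seq(1)] by simp
qed

lemma extended_form_invariant:
  assumes x: "x \<in> A0" and y: "y \<in> A0"
  shows "extended_form (qmult a x) y = extended_form x (qmult (star a) y)"
proof -
  obtain X where X: "\<And>n. X n \<in> A0" "X \<longlonglongrightarrow> a" using A0_sequence_tendsto by blast
  have "(\<lambda>n. qmult (star (X n)) y) \<longlonglongrightarrow> qmult (star a) y"
    using continuous_on_tendsto_compose[OF continuous_on_qmult_right[OF y]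
        bounded_linear.tendsto[OF bounded_linear_star X(2)]] by simp
  then have "(\<lambda>n. \<omega> (qmult (star (qmult (star (X n)) y)) x)) \<longlonglongrightarrow> extended_form x (qmult (star a) y)"
    using X(1) y by (intro extended_form_tendsto A0_qmult A0_star)
  moreover have "(\<lambda>n. \<omega> (qmult (star (qmult (star (X n)) y)) x)) = (\<lambda>n. \<omega> (qmult (star y) (qmult (X n) x)))"
    using X(1) x y by (simp add: star_qmult qmult_assoc_mid A0_star)
  moreover have "(\<lambda>n. \<omega> (qmult (star y) (qmult (X n) x))) \<longlonglongrightarrow> \<omega> (qmult (star y) (qmult a x))"
    using continuous_on_tendsto_compose[OF continuous_on_compose2[OF
          continuous_on_omega_star_left[OF y] continuous_on_qmult_right[OF x]] X(2)] by simp
  ultimately show ?thesis using LIMSEQ_unique extended_form_A0[OF y] by metis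
qed

lemma tendsto_extended_form_diagonal:
  assumes X: "X \<longlonglongrightarrow> a"
  shows "(\<lambda>n. extended_form (X n) (X n)) \<longlonglongrightarrow> extended_form a a"
proof (rule LIM_zero_cancel, rule Lim_null_comparison)
  let ?bound = "\<lambda>n. bound_const * norm (X n) * norm (X n - a) + bound_const * norm (X n - a) * norm a"
  have "extended_form (X n) (X n) - extended_form a a
      = extended_form (X n - a) (X n) + extended_form a (X n - a)" for n
    by (simp add: extended_form_diff_left extended_form_diff_right)
  then have "norm (extended_form (X n) (X n) - extended_form a a) \<le> ?bound n" for n
    using norm_triangle_le[OF add_mono[OF norm_extended_form_le norm_extended_form_le]] by simp
  then show "\<forall>\<^sub>F n in sequentially. norm (extended_form (X n) (X n) - extended_form a a) \<le> ?bound n"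
    by (intro always_eventually allI)
  have "(\<lambda>n. X n - a) \<longlonglongrightarrow> 0"
    using tendsto_diff[OF X tendsto_const[of a]] by simp
  then have "(\<lambda>n. norm (X n - a)) \<longlonglongrightarrow> 0"
    by (rule tendsto_norm_zero)
  then have "?bound \<longlonglongrightarrow> bound_const * norm a * 0 + bound_const * 0 * norm a"
    by (intro tendsto_intros X)
  then show "?bound \<longlonglongrightarrow> 0" by simp
qed

lemma extended_form_nonneg: "0 \<le> extended_form a a"
proof -
  obtain X where X: "\<And>n. X n \<in> A0" "X \<longlonglongrightarrow> a" using A0_sequence_tendsto by blast
  have "0 \<le> extended_form (X n) (X n)" for n
    using extended_form_A0[OF X(1)] omega_square_nonneg[OF X(1)] by simp
  then show ?thesis by (rule complex_nonneg_limit[OF _ tendsto_extended_form_diagonal[OF X(2)]])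
qed

lemma extension_in_S_A0:
  "(\<lambda>a b. extended_form a b / of_real bound_const) \<in> S_A0 A0 sm star qmult"
proof -
  have "sesquilinear_form sm (\<lambda>a b. extended_form a b / of_real bound_const)"
    using sesquilinear_extended_form by (simp add: sesquilinear_form_def add_divide_distrib)
  moreover have "0 \<le> extended_form a a / of_real bound_const" for a
    using extended_form_nonneg[of a] bound_const(1)
    by (simp add: less_eq_complex_def)
  moreover have "cmod (extended_form a b / of_real bound_const) \<le> norm a * norm b" for a b
    using norm_extended_form_le[of a b] bound_const(1)
    by (simp add: norm_divide divide_le_eq mult_ac)
  ultimately show ?thesis
    unfolding S_A0_def using extended_form_invariant by auto
qed

end

context unital_banach_qsa
begin

lemma Rc_functionalI: "\<omega> \<in> Rc A0 sm star qmult \<Longrightarrow> Rc_functional A0 sm star qmult e \<omega>"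
  by unfold_locales

lemma A_R_UNIV: "A_R A0 sm star qmult = UNIV"
  unfolding A_R_def using Rc_functional.closure_dom_UNIV[OF Rc_functionalI] by auto

lemma Rc_extends_to_S_A0:
  assumes "\<omega> \<in> Rc A0 sm star qmult"
  shows "\<exists>\<Omega>\<in>S_A0 A0 sm star qmult. \<exists>c. c \<noteq> 0 \<and> (\<forall>a. \<Omega> a e = c * \<omega> a)"
proof -
  interpret Rc_functional A0 sm star qmult e \<omega> using assms by (rule Rc_functionalI)
  have "extended_form a e / of_real bound_const = (1 / of_real bound_const) * \<omega> a" for a
    by (simp add: extended_form_A0[OF unit_A0])
  moreover have "1 / complex_of_real bound_const \<noteq> 0" using bound_const(1) by simp
  ultimately have "\<exists>c. c \<noteq> 0 \<and> (\<forall>a. extended_form a e / of_real bound_const = c * \<omega> a)"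
    by blast
  then show ?thesis by (rule bexI[OF _ extension_in_S_A0])
qed

lemma sandwiches_vanish_if_S_A0_null:
  assumes null: "\<forall>\<Omega>\<in>S_A0 A0 sm star qmult. \<Omega> a a = 0"
    and \<omega>: "\<omega> \<in> Rc A0 sm star qmult" and x: "x \<in> A0"
  shows "sandwich \<omega> x a = 0"
proof -
  from Rc_extends_to_S_A0[OF Rc_functional.sandwich_in_Rc[OF Rc_functionalI[OF \<omega>] x]]
  obtain \<Omega> where \<Omega>: "\<Omega> \<in> S_A0 A0 sm star qmult"
    and "\<exists>c. c \<noteq> 0 \<and> (\<forall>b. \<Omega> b e = c * sandwich \<omega> x b)" ..
  then obtain c where c: "c \<noteq> 0" "\<Omega> a e = c * sandwich \<omega> x a" by blast
  have "sesquilinear_form sm \<Omega>" "\<And>b. 0 \<le> \<Omega> b b" using \<Omega> by (simp_all add: S_A0_def)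
  moreover have "\<Omega> a a = 0" using null \<Omega> by blast
  ultimately have "\<Omega> a e = 0" by (rule positive_sesquilinear_form_null_vector)
  then show ?thesis using c by simp
qed

lemma A_plus_if_sandwiches_vanish:
  assumes P: "condition_P A0 sm star qmult"
    and vanish: "\<And>\<omega> x. \<omega> \<in> Rc A0 sm star qmult \<Longrightarrow> x \<in> A0 \<Longrightarrow> sandwich \<omega> x a = 0"
  shows "a \<in> A_plus A0 star qmult" "- a \<in> A_plus A0 star qmult"
proof -
  have positive: "b \<in> A_plus A0 star qmult"
    if vanish_b: "\<And>\<omega> x. \<omega> \<in> Rc A0 sm star qmult \<Longrightarrow> x \<in> A0 \<Longrightarrow> sandwich \<omega> x b = 0" for b
  proof -
    have "\<forall>\<omega>\<in>Rc A0 sm star qmult. \<forall>x\<in>A0. 0 \<le> \<omega> (qmult (qmult (star x) b) x)"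
    proof (intro ballI)
      fix \<omega> x assume "\<omega> \<in> Rc A0 sm star qmult" "x \<in> A0"
      then show "0 \<le> \<omega> (qmult (qmult (star x) b) x)" using vanish_b[of \<omega> x] by (simp add: sandwich_def)
    qed
    then show ?thesis using P unfolding condition_P_def by blast
  qed
  have vanish_neg: "sandwich \<omega> x (- a) = 0" if "\<omega> \<in> Rc A0 sm star qmult" "x \<in> A0" for \<omega> x
    using vanish[OF that] Rc_functional.omega_uminus[OF Rc_functionalI[OF that(1)]] that(2)
    by (simp add: sandwich_def qmult_uminus_right qmult_uminus_left A0_star)
  show "a \<in> A_plus A0 star qmult" by (rule positive) (rule vanish)
  show "- a \<in> A_plus A0 star qmult" by (rule positive) (rule vanish_neg)
qed

lemma A_plus_antisym_if_Rc_sufficient: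
  assumes "Rc_sufficient A0 sm star qmult"
    and "a \<in> A_plus A0 star qmult" "- a \<in> A_plus A0 star qmult"
  shows "a = 0"
proof (rule ccontr)
  assume "a \<noteq> 0"
  then obtain \<omega> where \<omega>: "\<omega> \<in> Rc A0 sm star qmult" "0 < \<omega> a"
    using assms(1,2) unfolding Rc_sufficient_def by blast
  interpret Rc_functional A0 sm star qmult e \<omega> using \<omega>(1) by (rule Rc_functionalI)
  have "\<omega> a \<le> 0" using nonneg_A_plus[OF assms(3)] by (simp add: omega_uminus)
  with \<omega>(2) show False by (metis order.strict_trans2 order.irrefl)
qed

end

locale S_A0_form = unital_banach_qsa +
  fixes \<Omega> :: "'a \<Rightarrow> 'a \<Rightarrow> complex"
  assumes in_S_A0: "\<Omega> \<in> S_A0 A0 sm star qmult"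
begin

lemma sesquilinear: "sesquilinear_form sm \<Omega>"
  using in_S_A0 by (simp add: S_A0_def)
lemma form_nonneg: "0 \<le> \<Omega> a a"
  using in_S_A0 by (simp add: S_A0_def)
lemma form_invariant: "x \<in> A0 \<Longrightarrow> y \<in> A0 \<Longrightarrow> \<Omega> (qmult a x) y = \<Omega> x (qmult (star a) y)"
  using in_S_A0 by (simp add: S_A0_def)
lemma norm_form_le: "cmod (\<Omega> a b) \<le> norm a * norm b"
  using in_S_A0 by (simp add: S_A0_def)
lemma form_add_left: "\<Omega> (a + b) c = \<Omega> a c + \<Omega> b c"
  using sesquilinear by (simp add: sesquilinear_form_def)
lemma form_add_right: "\<Omega> a (b + c) = \<Omega> a b + \<Omega> a c"
  using sesquilinear by (simp add: sesquilinear_form_def)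
lemma form_uminus_left: "\<Omega> (- a) b = - \<Omega> a b"
  using form_add_left[of a "- a" b] form_add_left[of 0 0 b] by (simp add: add_eq_0_iff)
lemma form_sm_left: "\<Omega> (sm z a) b = z * \<Omega> a b"
  using sesquilinear by (simp add: sesquilinear_form_def)
lemma form_sm_right: "\<Omega> a (sm z b) = cnj z * \<Omega> a b"
  using sesquilinear by (simp add: sesquilinear_form_def)

lemma bounded_linear_form_left: "bounded_linear (\<lambda>u. \<Omega> u z)"
  by (rule bounded_linear_intro[where K="norm z"])
     (auto simp: form_add_left norm_form_le simp flip: sm_of_real simp: form_sm_left scaleR_conv_of_real)

lemma bounded_linear_form_right: "bounded_linear (\<lambda>u. \<Omega> z u)"
proof -
  have "cmod (\<Omega> z u) \<le> norm u * norm z" for u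
    using norm_form_le[of z u] by (simp add: mult.commute)
  then show ?thesis
    by (intro bounded_linear_intro[where K="norm z"])
       (auto simp: form_add_right simp flip: sm_of_real simp: form_sm_right scaleR_conv_of_real)
qed

lemma sandwich_nonneg_A_plus:
  assumes z: "z \<in> A0" and a: "a \<in> A_plus A0 star qmult"
  shows "0 \<le> \<Omega> (qmult a z) z"
proof (rule nonneg_on_A_plus[OF _ _ _ a, of "\<lambda>b. \<Omega> (qmult b z) z"])
  show "\<Omega> (qmult (b + c) z) z = \<Omega> (qmult b z) z + \<Omega> (qmult c z) z" for b c
    by (simp add: qmult_add_left[OF z] form_add_left)
  show "continuous_on UNIV (\<lambda>b. \<Omega> (qmult b z) z)"
    using continuous_on_compose2[OF linear_continuous_on[OF bounded_linear_form_left]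
        continuous_on_qmult_right[OF z]] by auto
  fix x assume x: "x \<in> A0"
  have "\<Omega> (qmult (qmult (star x) x) z) z = \<Omega> (qmult (star x) (qmult x z)) z"
    using x z by (simp add: qmult_assoc_right A0_star)
  also have "\<dots> = \<Omega> (qmult x z) (qmult x z)"
    using form_invariant[OF A0_qmult[OF x z] z, of "star x"] by simp
  finally show "0 \<le> \<Omega> (qmult (qmult (star x) x) z) z" using form_nonneg by simp
qed

text \<open>Polarization on A0 turns the vanishing of the diagonal values \<Omega>(a z, z) into
\<Omega>(a x, y) = 0; with x = e and density of A0 this gives \<Omega>(a, a) = 0.\<close>
lemma null_if_sandwiches_zero:
  assumes zero: "\<And>z. z \<in> A0 \<Longrightarrow> \<Omega> (qmult a z) z = 0"
  shows "\<Omega> a a = 0"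
proof -
  have off_diag: "\<Omega> (qmult a x) y = 0" if x: "x \<in> A0" and y: "y \<in> A0" for x y
  proof -
    have iy: "sm \<i> y \<in> A0" using A0_sm[OF y] .
    have "\<Omega> (qmult a x) y + \<Omega> (qmult a y) x = 0"
      using zero[OF A0_add[OF x y]] zero[OF x] zero[OF y] x y
      by (simp add: qmult_add_right_A0 form_add_left form_add_right add.commute)
    moreover have "- \<i> * \<Omega> (qmult a x) y + \<i> * \<Omega> (qmult a y) x = 0"
      using zero[OF A0_add[OF x iy]] zero[OF x] zero[OF y] x y iy
      by (simp add: qmult_add_right_A0 qmult_sm_right_A0 form_add_left form_add_right
          form_sm_left form_sm_right algebra_simps)
    ultimately show ?thesis by (simp add: algebra_simps complex_eq_iff)
  qed
  obtain Y where Y: "\<And>n. Y n \<in> A0" "Y \<longlonglongrightarrow> a" using A0_sequence_tendsto by blast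
  have "(\<lambda>n. \<Omega> a (Y n)) \<longlonglongrightarrow> \<Omega> a a"
    by (rule bounded_linear.tendsto[OF bounded_linear_form_right Y(2)])
  moreover have "\<Omega> a (Y n) = 0" for n using off_diag[OF unit_A0 Y(1)] by simp
  ultimately show ?thesis by (simp add: LIMSEQ_const_iff)
qed

end

context unital_banach_qsa
begin

lemma S_A0_formI: "\<Omega> \<in> S_A0 A0 sm star qmult \<Longrightarrow> S_A0_form A0 sm star qmult e \<Omega>"
  by unfold_locales

lemma star_semisimple_if_Rc_sufficient:
  assumes P: "condition_P A0 sm star qmult" and suff: "Rc_sufficient A0 sm star qmult"
  shows "star_semisimple A0 sm star qmult"
  unfolding star_semisimple_def
proof (intro allI impI)
  fix a :: 'a assume "a \<noteq> 0"
  show "\<exists>\<Omega>\<in>S_A0 A0 sm star qmult. 0 < \<Omega> a a"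
  proof (rule ccontr)
    assume none: "\<not> (\<exists>\<Omega>\<in>S_A0 A0 sm star qmult. 0 < \<Omega> a a)"
    have "\<forall>\<Omega>\<in>S_A0 A0 sm star qmult. \<Omega> a a = 0"
    proof
      fix \<Omega> assume "\<Omega> \<in> S_A0 A0 sm star qmult"
      then show "\<Omega> a a = 0"
        using S_A0_form.form_nonneg[OF S_A0_formI, of \<Omega> a] none by (auto simp: order_le_less)
    qed
    then have vanish: "sandwich \<omega> x a = 0" if "\<omega> \<in> Rc A0 sm star qmult" "x \<in> A0" for \<omega> x
      using sandwiches_vanish_if_S_A0_null that by blast
    have "a = 0"
      using A_plus_antisym_if_Rc_sufficient[OF suff] A_plus_if_sandwiches_vanish[OF P vanish] by blast
    then show False using \<open>a \<noteq> 0\<close> by contradiction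
  qed
qed

lemma Rc_sufficient_if_star_semisimple:
  assumes P: "condition_P A0 sm star qmult" and semisimple: "star_semisimple A0 sm star qmult"
  shows "Rc_sufficient A0 sm star qmult"
  unfolding Rc_sufficient_def
proof (intro ballI impI)
  fix a assume a: "a \<in> A_plus A0 star qmult" and "a \<noteq> 0"
  show "\<exists>\<omega>\<in>Rc A0 sm star qmult. 0 < \<omega> a"
  proof (rule ccontr)
    assume none: "\<not> (\<exists>\<omega>\<in>Rc A0 sm star qmult. 0 < \<omega> a)"
    have "\<omega> a = 0" if "\<omega> \<in> Rc A0 sm star qmult" for \<omega>
      using Rc_functional.nonneg_A_plus[OF Rc_functionalI[OF that] a] none that
      by (auto simp: order_le_less)
    then have "sandwich \<omega> x a = 0" if "\<omega> \<in> Rc A0 sm star qmult" "x \<in> A0" for \<omega> x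
      using Rc_functional.sandwich_in_Rc[OF Rc_functionalI[OF that(1)] that(2)] by blast
    then have minus_a: "- a \<in> A_plus A0 star qmult"
      by (rule A_plus_if_sandwiches_vanish(2)[OF P])
    obtain \<Omega> where \<Omega>: "\<Omega> \<in> S_A0 A0 sm star qmult" "0 < \<Omega> a a"
      using semisimple \<open>a \<noteq> 0\<close> unfolding star_semisimple_def by blast
    interpret S_A0_form A0 sm star qmult e \<Omega> using \<Omega>(1) by (rule S_A0_formI)
    have "\<Omega> (qmult a z) z = 0" if "z \<in> A0" for z
    proof (rule order.antisym)
      have "0 \<le> \<Omega> (qmult (- a) z) z" by (rule sandwich_nonneg_A_plus[OF that minus_a])
      then show "\<Omega> (qmult a z) z \<le> 0" by (simp add: qmult_uminus_left[OF that] form_uminus_left)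
    qed (rule sandwich_nonneg_A_plus[OF that a])
    then show False using null_if_sandwiches_zero \<Omega>(2) by (metis order.irrefl)
  qed
qed

end

theorem mainTheorem6:
  fixes A0 :: "'a::banach set"
    and sm :: "complex \<Rightarrow> 'a \<Rightarrow> 'a"
    and star :: "'a \<Rightarrow> 'a"
    and qmult :: "'a \<Rightarrow> 'a \<Rightarrow> 'a"
    and e :: 'a
  assumes "banach_quasi_star_algebra A0 sm star qmult"
    and "qsa_unit A0 qmult e"
  shows "(Rc_sufficient A0 sm star qmult \<longleftrightarrow> fully_representable A0 sm star qmult)
       \<and> (condition_P A0 sm star qmult \<longrightarrow>
            (Rc_sufficient A0 sm star qmult \<longleftrightarrow> star_semisimple A0 sm star qmult))"
proof -
  interpret unital_banach_qsa A0 sm star qmult e using assms by unfold_locales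
  show ?thesis
    using A_R_UNIV star_semisimple_if_Rc_sufficient Rc_sufficient_if_star_semisimple
    by (auto simp: fully_representable_def)
qed

end
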